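(* A permutation $w\in S_n$ is circuit-free if and only if $|R(w)|=|B(w)|+|C(w)|-1$.
   Context: $S_n$ is generated by the adjacent transpositions $s_1,\dots,s_{n-1}$. A reduced word for $w$ is a word $i_1\cdots i_k$ with $w=s_{i_1}\cdots s_{i_k}$ and $k$ minimal; $R(w)$ is the set of reduced words. A braid move replaces a factor (consecutive letters) $i(i+1)i$ by $(i+1)i(i+1)$ or vice versa; a commutation move replaces a factor $ij$ with $|i-j|>1$ by $ji$. $B(w)$ (resp. $C(w)$) is the set of equivalence classes of $R(w)$ under sequences of braid moves (resp. commutation moves). Let $\Gamma(w)$ be the simple graph with vertex set $B(w)\sqcup C(w)$, with an edge between $B\in B(w)$ and $C\in C(w)$ if and only if $B\cap C\neq\emptyset$. The permutation $w$ is circuit-free if $\Gamma(w)$ contains no cycle (i.e. $\Gamma(w)$ is a forest; it is in fact connected, so this means it is a tree). *)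

theory Defs
  imports "HOL-Combinatorics.Permutations" "HOL-Combinatorics.Transposition"
begin

text \<open>Permutations of S_n act on {1..n}; s_i is the adjacent transposition of i and i+1,
  for 1 \<le> i \<le> n-1. A word i_1...i_k denotes s_{i_1} \<circ> ... \<circ> s_{i_k}.\<close>

definition adj_transp :: "nat \<Rightarrow> nat \<Rightarrow> nat" where
  "adj_transp i = transpose i (Suc i)"

definition word_perm :: "nat list \<Rightarrow> nat \<Rightarrow> nat" where
  "word_perm ws = foldr (\<lambda>i f. adj_transp i \<circ> f) ws id"

definition is_word_for :: "nat \<Rightarrow> (nat \<Rightarrow> nat) \<Rightarrow> nat list \<Rightarrow> bool" where
  "is_word_for n w ws \<longleftrightarrow> set ws \<subseteq> {1..<n} \<and> word_perm ws = w"

definition coxeter_length :: "nat \<Rightarrow> (nat \<Rightarrow> nat) \<Rightarrow> nat" where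
  "coxeter_length n w = (LEAST k. \<exists>ws. is_word_for n w ws \<and> length ws = k)"

definition reduced_words :: "nat \<Rightarrow> (nat \<Rightarrow> nat) \<Rightarrow> nat list set" where
  "reduced_words n w = {ws. is_word_for n w ws \<and> length ws = coxeter_length n w}"

definition braid_move :: "nat list \<Rightarrow> nat list \<Rightarrow> bool" where
  "braid_move u v \<longleftrightarrow> (\<exists>x y i.
     (u = x @ [i, Suc i, i] @ y \<and> v = x @ [Suc i, i, Suc i] @ y) \<or>
     (u = x @ [Suc i, i, Suc i] @ y \<and> v = x @ [i, Suc i, i] @ y))"

definition comm_move :: "nat list \<Rightarrow> nat list \<Rightarrow> bool" where
  "comm_move u v \<longleftrightarrow> (\<exists>x y i j. (i > Suc j \<or> j > Suc i) \<and>
     u = x @ [i, j] @ y \<and> v = x @ [j, i] @ y)"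

definition move_classes :: "('a \<Rightarrow> 'a \<Rightarrow> bool) \<Rightarrow> 'a set \<Rightarrow> 'a set set" where
  "move_classes mv S =
     (\<lambda>u. {v \<in> S. (\<lambda>a b. a \<in> S \<and> b \<in> S \<and> mv a b)\<^sup>*\<^sup>* u v}) ` S"

definition braid_classes :: "nat \<Rightarrow> (nat \<Rightarrow> nat) \<Rightarrow> nat list set set" where
  "braid_classes n w = move_classes braid_move (reduced_words n w)"

definition comm_classes :: "nat \<Rightarrow> (nat \<Rightarrow> nat) \<Rightarrow> nat list set set" where
  "comm_classes n w = move_classes comm_move (reduced_words n w)"

definition gamma_vertices :: "nat \<Rightarrow> (nat \<Rightarrow> nat) \<Rightarrow> (nat list set + nat list set) set" where
  "gamma_vertices n w = Inl ` braid_classes n w \<union> Inr ` comm_classes n w"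

definition gamma_adj :: "(nat list set + nat list set) \<Rightarrow> (nat list set + nat list set) \<Rightarrow> bool" where
  "gamma_adj x y \<longleftrightarrow> (\<exists>b c. ((x = Inl b \<and> y = Inr c) \<or> (x = Inr c \<and> y = Inl b)) \<and> b \<inter> c \<noteq> {})"

definition has_cycle :: "'v set \<Rightarrow> ('v \<Rightarrow> 'v \<Rightarrow> bool) \<Rightarrow> bool" where
  "has_cycle V E \<longleftrightarrow> (\<exists>vs. length vs \<ge> 3 \<and> distinct vs \<and> set vs \<subseteq> V \<and>
     (\<forall>i < length vs. E (vs ! i) (vs ! ((i + 1) mod length vs))))"

definition circuit_free :: "nat \<Rightarrow> (nat \<Rightarrow> nat) \<Rightarrow> bool" where
  "circuit_free n w \<longleftrightarrow> \<not> has_cycle (gamma_vertices n w) gamma_adj"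

end

theory Submission
  imports Defs
begin

text \<open>The graph Gamma(w) has |B(w)| + |C(w)| vertices, and each reduced word u gives the edge
  between its braid class and its commutation class. Distinct words give distinct edges: a braid
  class and a commutation class meet in at most one word, because in the sequence of inversions
  produced by the letters of a word, braid moves keep the relative order of disjoint inversions
  and commutation moves that of intersecting ones. So Gamma(w) has |R(w)| edges. By Matsumoto's
  theorem (proved via the inversion count of w) any two reduced words are joined by moves, so
  Gamma(w) is connected, and a connected finite graph is a tree exactly when it has one edge
  fewer than vertices.\<close>

section \<open>Finite simple graphs\<close>

definition induced_adj :: "'v set \<Rightarrow> ('v \<Rightarrow> 'v \<Rightarrow> bool) \<Rightarrow> 'v \<Rightarrow> 'v \<Rightarrow> bool" where
  "induced_adj V E a b \<longleftrightarrow> a \<in> V \<and> b \<in> V \<and> E a b"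

definition edge_set :: "'v set \<Rightarrow> ('v \<Rightarrow> 'v \<Rightarrow> bool) \<Rightarrow> 'v set set" where
  "edge_set V E = {{a, b} | a b. induced_adj V E a b}"

lemma finite_edge_set: "finite V \<Longrightarrow> finite (edge_set V E)"
  by (rule finite_subset[of _ "Pow V"]) (auto simp: edge_set_def induced_adj_def)

lemma edge_setI: "induced_adj V E a b \<Longrightarrow> {a, b} \<in> edge_set V E"
  unfolding edge_set_def by blast

lemma symp_induced_adj: "symp E \<Longrightarrow> symp (induced_adj V E)"
  by (auto simp: induced_adj_def symp_def)

lemma card_le_card_edge_set_if_connected:
  assumes fin: "finite V" and r: "r \<in> V" and conn: "\<forall>x\<in>V. (induced_adj V E)\<^sup>*\<^sup>* r x"
  shows "card V \<le> card (edge_set V E) + 1"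
proof -
  let ?R = "induced_adj V E"
  define d where "d x = (LEAST k. (?R ^^ k) r x)" for x
  have d: "(?R ^^ d x) r x" if "x \<in> V" for x
    unfolding d_def by (rule LeastI_ex) (use conn that in \<open>auto simp: rtranclp_power\<close>)
  have d_le: "(?R ^^ k) r x \<Longrightarrow> d x \<le> k" for k x
    unfolding d_def by (rule Least_le)
  \<comment> \<open>A breadth-first parent: every vertex other than r has a neighbour one step closer to r.\<close>
  have parent: "\<exists>u. ?R u x \<and> Suc (d u) = d x" if x: "x \<in> V" "x \<noteq> r" for x
  proof -
    obtain m where m: "d x = Suc m"
      using d[OF x(1)] x(2) by (cases "d x") auto
    then obtain u where u: "(?R ^^ m) r u" "?R u x"
      using d[OF x(1)] by (metis relpowp_Suc_E)
    have "u \<in> V" using u(2) by (simp add: induced_adj_def)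
    from d_le[OF relpowp_Suc_I[OF d[OF this] u(2)]] have "d x \<le> Suc (d u)" .
    with d_le[OF u(1)] m u(2) show ?thesis by auto
  qed
  define p where "p x = (SOME u. ?R u x \<and> Suc (d u) = d x)" for x
  have p: "?R (p x) x \<and> Suc (d (p x)) = d x" if "x \<in> V" "x \<noteq> r" for x
    unfolding p_def by (rule someI_ex[OF parent[OF that]])
  have "inj_on (\<lambda>x. {p x, x}) (V - {r})"
  proof (rule inj_onI)
    fix x y assume x: "x \<in> V - {r}" and y: "y \<in> V - {r}" and eq: "{p x, x} = {p y, y}"
    show "x = y"
    proof (rule ccontr)
      assume "x \<noteq> y"
      with eq have "p y = x" "p x = y" by (auto simp: doubleton_eq_iff)
      with p[of x] p[of y] x y have "Suc (d y) = d x" "Suc (d x) = d y" by simp_all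
      then show False by simp
    qed
  qed
  moreover have "(\<lambda>x. {p x, x}) ` (V - {r}) \<subseteq> edge_set V E"
  proof (rule image_subsetI)
    fix x assume "x \<in> V - {r}"
    with p have "?R (p x) x" by blast
    then show "{p x, x} \<in> edge_set V E" by (rule edge_setI)
  qed
  ultimately have "card (V - {r}) \<le> card (edge_set V E)"
    by (rule card_inj_on_le) (rule finite_edge_set[OF fin])
  with r fin show ?thesis by simp
qed

lemma has_cycle_mono: "has_cycle V' E \<Longrightarrow> V' \<subseteq> V \<Longrightarrow> has_cycle V E"
  unfolding has_cycle_def by blast

definition path_in :: "'v set \<Rightarrow> ('v \<Rightarrow> 'v \<Rightarrow> bool) \<Rightarrow> 'v list \<Rightarrow> bool" where
  "path_in V E vs \<longleftrightarrow> vs \<noteq> [] \<and> distinct vs \<and> set vs \<subseteq> V \<and>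
     (\<forall>i. Suc i < length vs \<longrightarrow> E (vs ! i) (vs ! Suc i))"

lemma has_cycle_if_path_closes:
  assumes vs: "path_in V E vs" and j: "j + 3 \<le> length vs" and closes: "E (last vs) (vs ! j)"
  shows "has_cycle V E"
proof -
  define cs where "cs = drop j vs"
  have lcs: "length cs = length vs - j" unfolding cs_def by simp
  show ?thesis unfolding has_cycle_def
  proof (intro exI[of _ cs] conjI allI impI)
    show "3 \<le> length cs" using lcs j by simp
    show "distinct cs" "set cs \<subseteq> V"
      using vs set_drop_subset[of j vs] unfolding cs_def path_in_def by auto
    fix i assume i: "i < length cs"
    show "E (cs ! i) (cs ! ((i + 1) mod length cs))"
    proof (cases "i + 1 < length cs")
      case True
      then show ?thesis using vs lcs j unfolding cs_def path_in_def by simp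
    next
      case False
      with i have "i + 1 = length cs" by simp
      with lcs have "(i + 1) mod length cs = 0" "j + i = length vs - 1" by simp_all
      moreover have "vs \<noteq> []" using j by auto
      ultimately show ?thesis using closes j unfolding cs_def by (simp add: last_conv_nth)
    qed
  qed
qed

text \<open>Any longest path will do.\<close>
lemma exists_path_closed_at_end:
  assumes fin: "finite V" and v: "v \<in> V"
  shows "\<exists>vs. path_in V E vs \<and> (\<forall>u\<in>V. E (last vs) u \<longrightarrow> u \<in> set vs)"
proof -
  let ?P = "Collect (path_in V E)"
  have finP: "finite ?P"
    by (rule finite_subset[OF _ finite_subset_distinct[OF fin]]) (auto simp: path_in_def)
  from v have "[v] \<in> ?P" by (simp add: path_in_def)
  then have "length ` ?P \<noteq> {}" by blast
  then obtain vs where vs: "path_in V E vs" and vs_max: "length vs = Max (length ` ?P)"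
    using Max_in[OF finite_imageI[OF finP]] by (metis imageE mem_Collect_eq)
  have "u \<in> set vs" if u: "u \<in> V" "E (last vs) u" for u
  proof (rule ccontr)
    assume "u \<notin> set vs"
    moreover have "E ((vs @ [u]) ! i) ((vs @ [u]) ! Suc i)" if "Suc i < Suc (length vs)" for i
    proof (cases "Suc i < length vs")
      case False
      with that have "i = length vs - 1" by simp
      with vs u show ?thesis by (simp add: path_in_def nth_append last_conv_nth)
    qed (use vs in \<open>simp add: path_in_def nth_append\<close>)
    ultimately have "path_in V E (vs @ [u])"
      using vs u by (simp add: path_in_def)
    then have "length (vs @ [u]) \<le> length vs"
      unfolding vs_max by (intro Max_ge finite_imageI finP) (auto intro!: image_eqI)
    then show False by simp
  qed
  with vs show ?thesis by blast
qed

lemma has_cycle_if_two_neighbours: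
  assumes fin: "finite V" and ne: "V \<noteq> {}" and irr: "irreflp E"
    and deg: "\<forall>v\<in>V. \<exists>u1\<in>V. \<exists>u2\<in>V. u1 \<noteq> u2 \<and> E v u1 \<and> E v u2"
  shows "has_cycle V E"
proof -
  from ne obtain v where "v \<in> V" by blast
  then obtain vs where vs: "path_in V E vs" and closed: "\<forall>u\<in>V. E (last vs) u \<longrightarrow> u \<in> set vs"
    using exists_path_closed_at_end[OF fin] by blast
  let ?L = "length vs"
  have "last vs \<in> V" using vs by (auto simp: path_in_def)
  then obtain u where u: "u \<in> V" "E (last vs) u" "u \<noteq> vs ! (?L - 2)"
    using deg by metis
  with closed obtain j where j: "j < ?L" "vs ! j = u" by (auto simp: in_set_conv_nth)
  have "vs ! j \<noteq> last vs" using j u irr by (auto dest: irreflpD)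
  then have "j \<noteq> ?L - 1" using vs by (auto simp: path_in_def last_conv_nth)
  with j u have "j + 3 \<le> ?L" by (cases "j = ?L - 2") auto
  with vs u j show ?thesis by (intro has_cycle_if_path_closes) auto
qed

lemma card_edge_set_less_if_acyclic:
  assumes "finite V" "V \<noteq> {}" "symp E" "irreflp E" "\<not> has_cycle V E"
  shows "card (edge_set V E) < card V"
  using assms(1,2,5)
proof (induction "card V" arbitrary: V rule: less_induct)
  case less
  \<comment> \<open>Some vertex has at most one neighbour; delete it.\<close>
  have "\<not> (\<forall>v\<in>V. \<exists>u1\<in>V. \<exists>u2\<in>V. u1 \<noteq> u2 \<and> E v u1 \<and> E v u2)"
    using has_cycle_if_two_neighbours[OF less.prems(1,2) assms(4)] less.prems(3) by blast
  then obtain v u0 where v: "v \<in> V" and u0: "{u \<in> V. E v u} \<subseteq> {u0}"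
    by blast
  have "edge_set V E \<subseteq> insert {v, u0} (edge_set (V - {v}) E)"
  proof
    fix x assume "x \<in> edge_set V E"
    then obtain a b where x: "x = {a, b}" "a \<in> V" "b \<in> V" "E a b"
      unfolding edge_set_def induced_adj_def by blast
    consider "a = v" | "b = v" | "a \<noteq> v" "b \<noteq> v" by blast
    then show "x \<in> insert {v, u0} (edge_set (V - {v}) E)"
    proof cases
      case 1 with x u0 show ?thesis by blast
    next
      case 2 with x u0 assms(3) show ?thesis by (auto dest: sympD)
    next
      case 3 with x show ?thesis by (auto intro: edge_setI simp: induced_adj_def)
    qed
  qed
  then have "card (edge_set V E) \<le> card (insert {v, u0} (edge_set (V - {v}) E))"
    by (rule card_mono[rotated]) (simp add: finite_edge_set less.prems(1))
  also have "\<dots> \<le> Suc (card (edge_set (V - {v}) E))"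
    by (simp add: card_insert_if finite_edge_set less.prems(1))
  finally have card_edges: "card (edge_set V E) \<le> Suc (card (edge_set (V - {v}) E))" .
  show ?case
  proof (cases "V = {v}")
    case True
    then have "edge_set V E = {}"
      using assms(4) unfolding edge_set_def induced_adj_def by (auto dest: irreflpD)
    then show ?thesis using True by simp
  next
    case False
    have less_card: "card (V - {v}) < card V" using less.prems(1) v by (rule card_Diff1_less)
    have "\<not> has_cycle (V - {v}) E" using less.prems(3) has_cycle_mono by blast
    then have "card (edge_set (V - {v}) E) < card (V - {v})"
      using less.hyps[OF less_card] less.prems(1) False v by blast
    with card_edges less_card show ?thesis by linarith
  qed
qed

lemma has_cycle_edge_with_detour:
  assumes "has_cycle V E"
  shows "\<exists>a b. induced_adj V E a b \<and> (induced_adj V (\<lambda>x y. E x y \<and> {x, y} \<noteq> {a, b}))\<^sup>*\<^sup>* b a"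
proof -
  obtain vs where m3: "length vs \<ge> 3" and d: "distinct vs" and sV: "set vs \<subseteq> V"
    and cE: "\<forall>i < length vs. E (vs ! i) (vs ! ((i + 1) mod length vs))"
    using assms unfolding has_cycle_def by blast
  define m where "m = length vs"
  define a where "a = vs ! 0"
  define b where "b = vs ! 1"
  let ?R' = "induced_adj V (\<lambda>x y. E x y \<and> {x, y} \<noteq> {a, b})"
  have m: "0 < m" "1 < m" "m - 1 < m" "m - 1 \<noteq> 0" "m - 1 \<noteq> 1" "1 \<le> m - 1"
    using m3 unfolding m_def by linarith+
  have inV: "i < m \<Longrightarrow> vs ! i \<in> V" for i using sV unfolding m_def by auto
  have neq: "vs ! i \<noteq> vs ! j" if "i < m" "j < m" "i \<noteq> j" for i j
    using d that nth_eq_iff_index_eq unfolding m_def by blast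
  have edge: "?R' (vs ! k) (vs ! ((k + 1) mod m))"
    if "k < m" "{vs ! k, vs ! ((k + 1) mod m)} \<noteq> {a, b}" for k
  proof -
    have "(k + 1) mod m < m" using m(1) by simp
    with that cE inV show ?thesis unfolding induced_adj_def m_def by simp
  qed
  \<comment> \<open>The rest of the cycle leads from b back to a.\<close>
  have walk: "?R'\<^sup>*\<^sup>* b (vs ! k)" if "1 \<le> k" "k < m" for k
    using that
  proof (induction k)
    case (Suc k)
    show ?case
    proof (cases "k = 0")
      case False
      with Suc have "?R'\<^sup>*\<^sup>* b (vs ! k)" by simp
      moreover have "{vs ! k, vs ! Suc k} \<noteq> {a, b}"
        using neq[of "Suc k" 0] neq[of "Suc k" 1] Suc.prems False
        unfolding a_def b_def by (auto simp: doubleton_eq_iff)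
      with Suc.prems have "?R' (vs ! k) (vs ! Suc k)" using edge[of k] by simp
      ultimately show ?thesis by (rule rtranclp.rtrancl_into_rtrancl)
    qed (simp add: b_def)
  qed simp
  have "{vs ! (m - 1), a} \<noteq> {a, b}"
    using m neq[of "m - 1" 0] neq[of "m - 1" 1]
    unfolding a_def b_def by (auto simp: doubleton_eq_iff)
  moreover have "(m - 1 + 1) mod m = 0" using m by simp
  ultimately have "?R' (vs ! (m - 1)) a" using edge[of "m - 1"] m unfolding a_def by simp
  with walk[OF m(6,3)] have "?R'\<^sup>*\<^sup>* b a" by (rule rtranclp.rtrancl_into_rtrancl)
  moreover have "(0 + 1) mod m = 1" using m(2) by simp
  then have "induced_adj V E a b"
    using cE m(1,2) inV[OF m(1)] inV[OF m(2)] unfolding induced_adj_def a_def b_def m_def by metis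
  ultimately show ?thesis by blast
qed

lemma induced_adj_remove_detoured_edge:
  assumes sym: "symp E" and detour: "(induced_adj V (\<lambda>x y. E x y \<and> {x, y} \<noteq> {a, b}))\<^sup>*\<^sup>* b a"
    and "(induced_adj V E)\<^sup>*\<^sup>* x y"
  shows "(induced_adj V (\<lambda>x y. E x y \<and> {x, y} \<noteq> {a, b}))\<^sup>*\<^sup>* x y"
proof -
  let ?R' = "induced_adj V (\<lambda>x y. E x y \<and> {x, y} \<noteq> {a, b})"
  have "symp ?R'" using sym by (auto simp: symp_def induced_adj_def insert_commute)
  from symp_rtranclp[OF this] detour have detour': "?R'\<^sup>*\<^sup>* a b" by (rule sympD)
  have edge: "?R'\<^sup>*\<^sup>* x y" if "induced_adj V E x y" for x y
  proof (cases "{x, y} = {a, b}")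
    case True
    then have "(x = a \<and> y = b) \<or> (x = b \<and> y = a)" by (auto simp: doubleton_eq_iff)
    with detour detour' show ?thesis by blast
  next
    case False
    with that have "?R' x y" unfolding induced_adj_def by simp
    then show ?thesis by (rule r_into_rtranclp)
  qed
  from assms(3) show ?thesis
  proof (induction rule: rtranclp_induct)
    case (step y z)
    then show ?case using edge[of y z] by (meson rtranclp_trans)
  qed simp
qed

lemma has_cycle_remove_edge_connected:
  assumes sym: "symp E" and cyc: "has_cycle V E"
  shows "\<exists>e \<in> edge_set V E. \<forall>x y. (induced_adj V E)\<^sup>*\<^sup>* x y \<longrightarrow>
           (induced_adj V (\<lambda>a b. E a b \<and> {a, b} \<noteq> e))\<^sup>*\<^sup>* x y"
proof -
  obtain a b where "induced_adj V E a b"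
    and "(induced_adj V (\<lambda>x y. E x y \<and> {x, y} \<noteq> {a, b}))\<^sup>*\<^sup>* b a"
    using has_cycle_edge_with_detour[OF cyc] by blast
  with induced_adj_remove_detoured_edge[OF sym] show ?thesis
    by (intro bexI[of _ "{a, b}"] allI impI) (auto intro: edge_setI)
qed

lemma acyclic_iff_card_edge_set:
  assumes fin: "finite V" and r: "r \<in> V" and conn: "\<forall>x\<in>V. (induced_adj V E)\<^sup>*\<^sup>* r x"
    and sym: "symp E" and irr: "irreflp E"
  shows "\<not> has_cycle V E \<longleftrightarrow> card (edge_set V E) + 1 = card V"
proof
  assume "\<not> has_cycle V E"
  with r have "card (edge_set V E) < card V"
    using card_edge_set_less_if_acyclic[OF fin _ sym irr] by blast
  with card_le_card_edge_set_if_connected[OF fin r conn]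
  show "card (edge_set V E) + 1 = card V" by linarith
next
  assume card_V: "card (edge_set V E) + 1 = card V"
  show "\<not> has_cycle V E"
  proof
    assume "has_cycle V E"
    then obtain e where e: "e \<in> edge_set V E"
      and conn_e: "\<forall>x y. (induced_adj V E)\<^sup>*\<^sup>* x y \<longrightarrow>
        (induced_adj V (\<lambda>a b. E a b \<and> {a, b} \<noteq> e))\<^sup>*\<^sup>* x y"
      using has_cycle_remove_edge_connected[OF sym] by blast
    define E' where "E' a b \<longleftrightarrow> E a b \<and> {a, b} \<noteq> e" for a b
    have "\<forall>x\<in>V. (induced_adj V E')\<^sup>*\<^sup>* r x"
      using conn conn_e unfolding E'_def by blast
    then have "card V \<le> card (edge_set V E') + 1"
      by (rule card_le_card_edge_set_if_connected[OF fin r])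
    also have "edge_set V E' = edge_set V E - {e}"
      unfolding edge_set_def induced_adj_def E'_def by blast
    finally have "card V \<le> card (edge_set V E - {e}) + 1" .
    moreover have "card (edge_set V E - {e}) + 1 = card (edge_set V E)"
      using card_Suc_Diff1[OF finite_edge_set[OF fin] e] by simp
    ultimately show False using card_V by linarith
  qed
qed

section \<open>Words, inversions and Coxeter length\<close>

lemma word_perm_Nil [simp]: "word_perm [] = id"
  by (simp add: word_perm_def)

lemma word_perm_Cons [simp]: "word_perm (i # ws) = adj_transp i \<circ> word_perm ws"
  by (simp add: word_perm_def)

lemma adj_transp_apply: "adj_transp i x = (if x = i then Suc i else if x = Suc i then i else x)"
  by (simp add: adj_transp_def transpose_def)

lemma adj_transp_adj_transp [simp]: "adj_transp i (adj_transp i x) = x"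
  by (simp add: adj_transp_def)

lemma adj_transp_comp_adj_transp [simp]: "adj_transp i \<circ> (adj_transp i \<circ> f) = f"
  by (simp add: fun_eq_iff)

lemma bij_adj_transp [simp]: "bij (adj_transp i)"
  by (simp add: adj_transp_def)

lemma bij_word_perm: "bij (word_perm ws)"
proof (induction ws)
  case (Cons i ws)
  then show ?case unfolding word_perm_Cons by (rule bij_comp[OF _ bij_adj_transp])
qed (simp only: word_perm_Nil bij_id)

lemma image_adj_transp_image_adj_transp [simp]: "adj_transp i ` adj_transp i ` X = X"
  by (simp add: image_image)

lemma inv_adj_transp [simp]: "inv (adj_transp i) = adj_transp i"
  by (simp add: adj_transp_def)

lemma inv_adj_transp_comp: "bij w \<Longrightarrow> inv (adj_transp i \<circ> w) = inv w \<circ> adj_transp i"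
  by (simp add: o_inv_distrib)

lemma inv_adj_transp_comp_apply:
  "w permutes S \<Longrightarrow> inv (adj_transp i \<circ> w) x = inv w (adj_transp i x)"
  by (simp add: inv_adj_transp_comp permutes_bij)

lemma adj_transp_commute:
  "Suc i < j \<or> Suc j < i \<Longrightarrow> adj_transp i \<circ> adj_transp j = adj_transp j \<circ> adj_transp i"
  by (auto simp: fun_eq_iff adj_transp_apply)

lemma adj_transp_braid:
  "adj_transp i \<circ> adj_transp (Suc i) \<circ> adj_transp i
     = adj_transp (Suc i) \<circ> adj_transp i \<circ> adj_transp (Suc i)"
  by (auto simp: fun_eq_iff adj_transp_apply)

lemma adj_transp_permutes: "1 \<le> i \<Longrightarrow> i < n \<Longrightarrow> adj_transp i permutes {1..n}"
  unfolding adj_transp_def by (rule permutes_swap_id) auto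

lemma permutes_adj_transp_comp:
  "w permutes {1..n} \<Longrightarrow> 1 \<le> i \<Longrightarrow> i < n \<Longrightarrow> (adj_transp i \<circ> w) permutes {1..n}"
  using permutes_compose adj_transp_permutes by blast

lemma is_word_for_Nil [simp]: "is_word_for n w [] \<longleftrightarrow> w = id"
  by (auto simp: is_word_for_def)

lemma is_word_for_Cons:
  "is_word_for n w (i # ws) \<longleftrightarrow> 1 \<le> i \<and> i < n \<and> is_word_for n (adj_transp i \<circ> w) ws"
proof -
  have "adj_transp i \<circ> word_perm ws = w \<longleftrightarrow> word_perm ws = adj_transp i \<circ> w"
    by (auto simp: fun_eq_iff) (metis adj_transp_adj_transp)
  then show ?thesis by (auto simp: is_word_for_def)
qed

lemma is_word_for_permutes: "is_word_for n w ws \<Longrightarrow> w permutes {1..n}"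
proof (induction ws arbitrary: w)
  case (Cons i ws)
  then have "1 \<le> i" "i < n" "is_word_for n (adj_transp i \<circ> w) ws"
    by (simp_all add: is_word_for_Cons)
  with Cons.IH have "1 \<le> i" "i < n" "(adj_transp i \<circ> w) permutes {1..n}"
    by simp_all
  then have "(adj_transp i \<circ> (adj_transp i \<circ> w)) permutes {1..n}"
    by (rule permutes_adj_transp_comp[rotated])
  then show ?case by simp
qed (simp add: permutes_id)

definition inversions :: "nat \<Rightarrow> (nat \<Rightarrow> nat) \<Rightarrow> nat set set" where
  "inversions n q = {{a, b} | a b. a \<in> {1..n} \<and> b \<in> {1..n} \<and> a < b \<and> q b < q a}"

lemma finite_inversions [simp]: "finite (inversions n q)"
  by (rule finite_subset[of _ "Pow {1..n}"]) (auto simp: inversions_def)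

lemma inversions_id [simp]: "inversions n id = {}"
  by (auto simp: inversions_def)

lemma inversionsI:
  "a \<in> {1..n} \<Longrightarrow> b \<in> {1..n} \<Longrightarrow> a < b \<Longrightarrow> q b < q a \<Longrightarrow> {a, b} \<in> inversions n q"
  unfolding inversions_def by blast

lemma adj_transp_pair_mem_inversions:
  assumes "1 \<le> i" "i < n"
  shows "{i, Suc i} \<in> inversions n q \<longleftrightarrow> q (Suc i) < q i"
proof
  assume "{i, Suc i} \<in> inversions n q"
  then obtain a b where "{i, Suc i} = {a, b}" "a < b" "q b < q a"
    unfolding inversions_def by blast
  then show "q (Suc i) < q i" by (auto simp: doubleton_eq_iff)
qed (use assms in \<open>simp add: inversionsI\<close>)

lemma adj_transp_less_adj_transp:
  "a < b \<Longrightarrow> {a, b} \<noteq> {i, Suc i} \<Longrightarrow> adj_transp i a < adj_transp i b"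
  by (auto simp: adj_transp_apply doubleton_eq_iff)

lemma adj_transp_in_interval:
  "1 \<le> i \<Longrightarrow> i < n \<Longrightarrow> a \<in> {1..n} \<Longrightarrow> adj_transp i a \<in> {1..n}"
  by (auto simp: adj_transp_apply)

lemma adj_transp_image_eq_pair_iff [simp]:
  "adj_transp i ` X = {i, Suc i} \<longleftrightarrow> X = {i, Suc i}"
proof
  assume "adj_transp i ` X = {i, Suc i}"
  then have "adj_transp i ` adj_transp i ` X = {i, Suc i}" by (simp add: adj_transp_apply)
  then show "X = {i, Suc i}" by (simp add: image_image)
qed (simp add: adj_transp_apply insert_commute)

lemma mem_inversions_comp_adj_transp:
  assumes i: "1 \<le> i" "i < n" and X: "X \<noteq> {i, Suc i}"
  shows "X \<in> inversions n (q \<circ> adj_transp i) \<longleftrightarrow> adj_transp i ` X \<in> inversions n q"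
proof
  assume "X \<in> inversions n (q \<circ> adj_transp i)"
  then obtain a b where ab: "X = {a, b}" "a \<in> {1..n}" "b \<in> {1..n}" "a < b"
    "q (adj_transp i b) < q (adj_transp i a)" unfolding inversions_def by auto
  with X have "adj_transp i a < adj_transp i b" by (simp add: adj_transp_less_adj_transp)
  with ab adj_transp_in_interval[OF i] show "adj_transp i ` X \<in> inversions n q"
    by (simp add: inversionsI)
next
  assume "adj_transp i ` X \<in> inversions n q"
  then obtain c d where cd: "adj_transp i ` X = {c, d}" "c \<in> {1..n}" "d \<in> {1..n}" "c < d"
    "q d < q c" unfolding inversions_def by auto
  have X_eq: "X = {adj_transp i c, adj_transp i d}"
    using arg_cong[OF cd(1), of "image (adj_transp i)"] by (simp add: image_image)
  have "{c, d} \<noteq> {i, Suc i}" using X cd(1) adj_transp_image_eq_pair_iff by metis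
  with cd have "adj_transp i c < adj_transp i d" by (simp add: adj_transp_less_adj_transp)
  with X_eq cd adj_transp_in_interval[OF i] show "X \<in> inversions n (q \<circ> adj_transp i)"
    by (simp add: inversionsI)
qed

lemma card_inversions_comp_adj_transp:
  assumes i: "1 \<le> i" "i < n" and descent: "q (Suc i) < q i"
  shows "card (inversions n q) = Suc (card (inversions n (q \<circ> adj_transp i)))"
proof -
  let ?T = "{i, Suc i}"
  have image_eq: "inversions n (q \<circ> adj_transp i) - {?T} = (`) (adj_transp i) ` (inversions n q - {?T})"
  proof (intro equalityI subsetI)
    fix X assume "X \<in> inversions n (q \<circ> adj_transp i) - {?T}"
    then have "adj_transp i ` X \<in> inversions n q - {?T}"
      using mem_inversions_comp_adj_transp[OF i, of X q] by simp
    moreover have "X = adj_transp i ` adj_transp i ` X" by (simp add: image_image)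
    ultimately show "X \<in> (`) (adj_transp i) ` (inversions n q - {?T})" by blast
  next
    fix X assume "X \<in> (`) (adj_transp i) ` (inversions n q - {?T})"
    then obtain Y where Y: "Y \<in> inversions n q" "Y \<noteq> ?T" "X = adj_transp i ` Y" by blast
    then have "X \<noteq> ?T" "adj_transp i ` X = Y" by (simp_all add: image_image)
    with Y mem_inversions_comp_adj_transp[OF i] show "X \<in> inversions n (q \<circ> adj_transp i) - {?T}"
      by simp
  qed
  have "inj_on ((`) (adj_transp i)) A" for A
  proof (rule inj_onI)
    fix Y Z assume "adj_transp i ` Y = adj_transp i ` Z"
    then have "adj_transp i ` adj_transp i ` Y = adj_transp i ` adj_transp i ` Z" by simp
    then show "Y = Z" by (simp add: image_image)
  qed
  then have card_eq: "card (inversions n (q \<circ> adj_transp i) - {?T}) = card (inversions n q - {?T})"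
    unfolding image_eq by (rule card_image)
  have T_in: "?T \<in> inversions n q" and T_notin: "?T \<notin> inversions n (q \<circ> adj_transp i)"
    using descent by (simp_all add: adj_transp_pair_mem_inversions[OF i] adj_transp_apply)
  have "card (inversions n q) = Suc (card (inversions n q - {?T}))"
    using card_Suc_Diff1[OF finite_inversions T_in] by simp
  also have "\<dots> = Suc (card (inversions n (q \<circ> adj_transp i) - {?T}))"
    by (simp only: card_eq)
  also have "inversions n (q \<circ> adj_transp i) - {?T} = inversions n (q \<circ> adj_transp i)"
    using T_notin by simp
  finally show ?thesis .
qed

lemma card_inversions_descent:
  assumes w: "w permutes {1..n}" and i: "1 \<le> i" "i < n" and descent: "inv w (Suc i) < inv w i"
  shows "card (inversions n (inv w)) = Suc (card (inversions n (inv (adj_transp i \<circ> w))))"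
  using card_inversions_comp_adj_transp[OF i descent]
  by (simp add: inv_adj_transp_comp[OF permutes_bij[OF w]])

lemma card_inversions_ascent:
  assumes w: "w permutes {1..n}" and i: "1 \<le> i" "i < n" and ascent: "\<not> inv w (Suc i) < inv w i"
  shows "card (inversions n (inv (adj_transp i \<circ> w))) = Suc (card (inversions n (inv w)))"
proof -
  let ?w' = "adj_transp i \<circ> w"
  have "inv w i \<noteq> inv w (Suc i)"
    using permutes_inj[OF permutes_inv[OF w]] by (metis inj_eq n_not_Suc_n)
  with ascent have "inv ?w' (Suc i) < inv ?w' i"
    by (simp add: inv_adj_transp_comp[OF permutes_bij[OF w]] adj_transp_apply)
  from card_inversions_descent[OF permutes_adj_transp_comp[OF w i] i this]
  show ?thesis by simp
qed

lemma card_inversions_le_length: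
  "is_word_for n w ws \<Longrightarrow> card (inversions n (inv w)) \<le> length ws"
proof (induction ws arbitrary: w)
  case (Cons i ws)
  then have i: "1 \<le> i" "i < n" and "is_word_for n (adj_transp i \<circ> w) ws"
    by (simp_all add: is_word_for_Cons)
  with Cons.IH have IH: "card (inversions n (inv (adj_transp i \<circ> w))) \<le> length ws"
    by simp
  have w: "w permutes {1..n}" using Cons.prems by (rule is_word_for_permutes)
  show ?case
  proof (cases "inv w (Suc i) < inv w i")
    case True
    with IH show ?thesis by (simp add: card_inversions_descent[OF w i])
  next
    case False
    with IH show ?thesis using card_inversions_ascent[OF w i] by simp
  qed
qed simp

lemma permutes_eq_id_if_increasing:
  assumes q: "q permutes {1..n}" and incr: "\<And>i. 1 \<le> i \<Longrightarrow> i < n \<Longrightarrow> q i < q (Suc i)"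
  shows "q = id"
proof -
  have range: "k \<in> {1..n} \<Longrightarrow> q k \<in> {1..n}" for k using permutes_in_image[OF q] by blast
  have lower: "k \<le> q k" if "1 \<le> k" "k \<le> n" for k
    using that
  proof (induction k)
    case (Suc k)
    show ?case
    proof (cases "k = 0")
      case True then show ?thesis using range[of 1] Suc.prems by auto
    next
      case False
      with Suc have "k \<le> q k" "q k < q (Suc k)" using incr by simp_all
      then show ?thesis by simp
    qed
  qed simp
  have upper: "q (n - m) \<le> n - m" if "1 \<le> n - m" for m
    using that
  proof (induction m)
    case 0 then show ?case using range[of n] by auto
  next
    case (Suc m)
    then have "n - m = Suc (n - Suc m)" "q (n - Suc m) < q (Suc (n - Suc m))"
      using incr by auto
    with Suc show ?case by simp
  qed
  have "q k = k" for k
  proof (cases "k \<in> {1..n}")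
    case True
    with upper[of "n - k"] lower[of k] show ?thesis by auto
  next
    case False then show ?thesis using q by (simp add: permutes_not_in)
  qed
  then show ?thesis by auto
qed

lemma exists_word_card_inversions:
  "w permutes {1..n} \<Longrightarrow> \<exists>ws. is_word_for n w ws \<and> length ws = card (inversions n (inv w))"
proof (induction "card (inversions n (inv w))" arbitrary: w rule: less_induct)
  case less
  show ?case
  proof (cases "\<forall>i. 1 \<le> i \<longrightarrow> i < n \<longrightarrow> inv w i < inv w (Suc i)")
    case True
    then have "inv w = id"
      using permutes_eq_id_if_increasing[OF permutes_inv[OF less.prems]] by blast
    then have "w = id" by (metis inv_id inv_inv_eq permutes_bij less.prems)
    then show ?thesis by (intro exI[of _ "[]"]) simp
  next
    case False
    then obtain i where i: "1 \<le> i" "i < n" and "\<not> inv w i < inv w (Suc i)" by blast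
    moreover have "inv w i \<noteq> inv w (Suc i)"
      using permutes_inj[OF permutes_inv[OF less.prems]] by (metis inj_eq n_not_Suc_n)
    ultimately have descent: "inv w (Suc i) < inv w i" by simp
    let ?w' = "adj_transp i \<circ> w"
    have card_eq: "card (inversions n (inv w)) = Suc (card (inversions n (inv ?w')))"
      by (rule card_inversions_descent[OF less.prems i descent])
    then obtain ws where "is_word_for n ?w' ws" "length ws = card (inversions n (inv ?w'))"
      using less.hyps permutes_adj_transp_comp[OF less.prems i] by fastforce
    with i card_eq show ?thesis
      by (intro exI[of _ "i # ws"]) (simp add: is_word_for_Cons)
  qed
qed

lemma coxeter_length_eq_card_inversions:
  assumes "w permutes {1..n}"
  shows "coxeter_length n w = card (inversions n (inv w))"
  unfolding coxeter_length_def
proof (rule Least_equality)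
  show "\<exists>ws. is_word_for n w ws \<and> length ws = card (inversions n (inv w))"
    using exists_word_card_inversions[OF assms] .
qed (auto dest: card_inversions_le_length)

lemma length_reduced_word: "ws \<in> reduced_words n w \<Longrightarrow> length ws = coxeter_length n w"
  by (simp add: reduced_words_def)

lemma reduced_words_nonempty:
  assumes "w permutes {1..n}"
  shows "reduced_words n w \<noteq> {}"
proof -
  obtain ws where "is_word_for n w ws" "length ws = card (inversions n (inv w))"
    using exists_word_card_inversions[OF assms] by blast
  then have "ws \<in> reduced_words n w"
    by (simp add: reduced_words_def coxeter_length_eq_card_inversions[OF assms])
  then show ?thesis by blast
qed

lemma finite_reduced_words: "finite (reduced_words n w)"
proof (rule finite_subset)
  show "reduced_words n w \<subseteq> {xs. set xs \<subseteq> {1..<n} \<and> length xs = coxeter_length n w}"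
    by (auto simp: reduced_words_def is_word_for_def)
qed (rule finite_lists_length_eq, simp)

lemma Cons_mem_reduced_words_iff:
  assumes w: "w permutes {1..n}"
  shows "i # ws \<in> reduced_words n w \<longleftrightarrow>
    1 \<le> i \<and> i < n \<and> inv w (Suc i) < inv w i \<and> ws \<in> reduced_words n (adj_transp i \<circ> w)"
    (is "?lhs \<longleftrightarrow> ?rhs")
proof
  assume ?lhs
  then have i: "1 \<le> i" "i < n" and word: "is_word_for n (adj_transp i \<circ> w) ws"
    and len: "Suc (length ws) = card (inversions n (inv w))"
    by (auto simp: reduced_words_def is_word_for_Cons coxeter_length_eq_card_inversions[OF w])
  have w': "(adj_transp i \<circ> w) permutes {1..n}" by (rule permutes_adj_transp_comp[OF w i])
  have le: "card (inversions n (inv (adj_transp i \<circ> w))) \<le> length ws"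
    using card_inversions_le_length[OF word] .
  have descent: "inv w (Suc i) < inv w i"
    using card_inversions_ascent[OF w i] le len by (cases "inv w (Suc i) < inv w i") auto
  with le len have "length ws = coxeter_length n (adj_transp i \<circ> w)"
    by (simp add: coxeter_length_eq_card_inversions[OF w'] card_inversions_descent[OF w i])
  with i descent word show ?rhs by (simp add: reduced_words_def)
next
  assume ?rhs
  then have "1 \<le> i" "i < n" "inv w (Suc i) < inv w i"
    "is_word_for n (adj_transp i \<circ> w) ws"
    "length ws = card (inversions n (inv (adj_transp i \<circ> w)))"
    by (auto simp: reduced_words_def coxeter_length_eq_card_inversions[OF
          permutes_adj_transp_comp[OF w]])
  then show ?lhs
    by (simp add: reduced_words_def is_word_for_Cons coxeter_length_eq_card_inversions[OF w]
        card_inversions_descent[OF w])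
qed

lemma Cons_mem_reduced_wordsI:
  "w permutes {1..n} \<Longrightarrow> 1 \<le> i \<Longrightarrow> i < n \<Longrightarrow> inv w (Suc i) < inv w i \<Longrightarrow>
    ws \<in> reduced_words n (adj_transp i \<circ> w) \<Longrightarrow> i # ws \<in> reduced_words n w"
  by (simp add: Cons_mem_reduced_words_iff)

section \<open>Matsumoto's theorem\<close>

definition reduced_move :: "nat \<Rightarrow> (nat \<Rightarrow> nat) \<Rightarrow> nat list \<Rightarrow> nat list \<Rightarrow> bool" where
  "reduced_move n w u v \<longleftrightarrow>
     u \<in> reduced_words n w \<and> v \<in> reduced_words n w \<and> (braid_move u v \<or> comm_move u v)"

lemma symp_braid_move: "symp braid_move"
  by (rule sympI) (auto simp: braid_move_def)

lemma symp_comm_move: "symp comm_move"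
  by (rule sympI) (auto simp: comm_move_def)

lemma symp_reduced_move: "symp (reduced_move n w)"
  using symp_braid_move symp_comm_move
  unfolding reduced_move_def by (auto intro!: sympI dest: sympD)

lemma braid_move_Cons: "braid_move u v \<Longrightarrow> braid_move (i # u) (i # v)"
  unfolding braid_move_def by (metis append_Cons)

lemma comm_move_Cons: "comm_move u v \<Longrightarrow> comm_move (i # u) (i # v)"
  unfolding comm_move_def by (metis append_Cons)

lemma reduced_moves_Cons:
  assumes w: "w permutes {1..n}" and i: "1 \<le> i" "i < n" and descent: "inv w (Suc i) < inv w i"
    and moves: "(reduced_move n (adj_transp i \<circ> w))\<^sup>*\<^sup>* u v"
  shows "(reduced_move n w)\<^sup>*\<^sup>* (i # u) (i # v)"
  using moves
proof (induction rule: rtranclp_induct)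
  case (step y z)
  then have "reduced_move n w (i # y) (i # z)"
    using Cons_mem_reduced_wordsI[OF w i descent] braid_move_Cons comm_move_Cons
    unfolding reduced_move_def by blast
  with step.IH show ?case by (rule rtranclp.rtrancl_into_rtrancl)
qed simp

text \<open>Induction step of Matsumoto's theorem for reduced words of w starting with letters i < j:
  s_i and s_j are both left descents of w, so w also has reduced words starting with i j and j i,
  or with i (i+1) i and (i+1) i (i+1), and these are joined by a single move.\<close>
lemma reduced_moves_commuting_descents:
  assumes IH: "\<And>w' x y. w' permutes {1..n} \<Longrightarrow> x \<in> reduced_words n w' \<Longrightarrow>
      y \<in> reduced_words n w' \<Longrightarrow> length x < length (i # u') \<Longrightarrow> (reduced_move n w')\<^sup>*\<^sup>* x y"
    and w: "w permutes {1..n}" and ij: "Suc i < j"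
    and u: "i # u' \<in> reduced_words n w" and v: "j # v' \<in> reduced_words n w"
  shows "(reduced_move n w)\<^sup>*\<^sup>* (i # u') (j # v')"
proof -
  let ?wi = "adj_transp i \<circ> w" and ?wj = "adj_transp j \<circ> w"
  from u v have i: "1 \<le> i" "i < n" and di: "inv w (Suc i) < inv w i"
    and u': "u' \<in> reduced_words n ?wi"
    and j: "1 \<le> j" "j < n" and dj: "inv w (Suc j) < inv w j"
    and v': "v' \<in> reduced_words n ?wj"
    by (simp_all add: Cons_mem_reduced_words_iff[OF w])
  have wi: "?wi permutes {1..n}" and wj: "?wj permutes {1..n}"
    using permutes_adj_transp_comp[OF w] i j by simp_all
  have commute: "adj_transp i \<circ> ?wj = adj_transp j \<circ> ?wi"
    using adj_transp_commute[of i j] ij by (simp add: fun_eq_iff)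
  obtain z where z: "z \<in> reduced_words n (adj_transp j \<circ> ?wi)"
    using reduced_words_nonempty[OF permutes_adj_transp_comp[OF wi j]] by blast
  have "inv ?wi (Suc j) < inv ?wi j" "inv ?wj (Suc i) < inv ?wj i"
    using di dj ij by (simp_all add: inv_adj_transp_comp_apply[OF w] adj_transp_apply)
  then have jz: "j # z \<in> reduced_words n ?wi" and iz: "i # z \<in> reduced_words n ?wj"
    using Cons_mem_reduced_wordsI[OF wi j] Cons_mem_reduced_wordsI[OF wj i] z commute by simp_all
  have lengths: "length (j # z) = length u'" "length (i # z) = length v'"
    using length_reduced_word[OF u'] length_reduced_word[OF jz]
      length_reduced_word[OF v'] length_reduced_word[OF iz] by simp_all
  have "(reduced_move n ?wi)\<^sup>*\<^sup>* u' (j # z)"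
    using IH[OF wi u' jz] by simp
  then have "(reduced_move n w)\<^sup>*\<^sup>* (i # u') (i # j # z)"
    by (rule reduced_moves_Cons[OF w i di])
  moreover have "reduced_move n w (i # j # z) (j # i # z)"
  proof -
    have "comm_move (i # j # z) (j # i # z)"
      unfolding comm_move_def using ij
      by (intro exI[of _ "[]"] exI[of _ z] exI[of _ i] exI[of _ j]) simp
    with Cons_mem_reduced_wordsI[OF w i di jz] Cons_mem_reduced_wordsI[OF w j dj iz]
    show ?thesis by (simp add: reduced_move_def)
  qed
  moreover have "(reduced_move n ?wj)\<^sup>*\<^sup>* (i # z) v'"
    using IH[OF wj iz v'] lengths(2) length_reduced_word[OF u] length_reduced_word[OF v] by simp
  then have "(reduced_move n w)\<^sup>*\<^sup>* (j # i # z) (j # v')"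
    by (rule reduced_moves_Cons[OF w j dj])
  ultimately show ?thesis by (meson rtranclp.rtrancl_into_rtrancl rtranclp_trans)
qed

lemma reduced_moves_braid_descents:
  assumes IH: "\<And>w' x y. w' permutes {1..n} \<Longrightarrow> x \<in> reduced_words n w' \<Longrightarrow>
      y \<in> reduced_words n w' \<Longrightarrow> length x < length (i # u') \<Longrightarrow> (reduced_move n w')\<^sup>*\<^sup>* x y"
    and w: "w permutes {1..n}"
    and u: "i # u' \<in> reduced_words n w" and v: "Suc i # v' \<in> reduced_words n w"
  shows "(reduced_move n w)\<^sup>*\<^sup>* (i # u') (Suc i # v')"
proof -
  let ?s = "adj_transp i" and ?t = "adj_transp (Suc i)"
  from u v have i: "1 \<le> i" "i < n" and di: "inv w (Suc i) < inv w i"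
    and u': "u' \<in> reduced_words n (?s \<circ> w)"
    and i1: "1 \<le> Suc i" "Suc i < n" and di1: "inv w (Suc (Suc i)) < inv w (Suc i)"
    and v': "v' \<in> reduced_words n (?t \<circ> w)"
    by (simp_all add: Cons_mem_reduced_words_iff[OF w])
  have perms: "(?s \<circ> w) permutes {1..n}" "(?t \<circ> w) permutes {1..n}"
    "(?t \<circ> (?s \<circ> w)) permutes {1..n}" "(?s \<circ> (?t \<circ> w)) permutes {1..n}"
    using permutes_adj_transp_comp w i i1 by blast+
  have braid: "?s \<circ> (?t \<circ> (?s \<circ> w)) = ?t \<circ> (?s \<circ> (?t \<circ> w))"
    using adj_transp_braid[of i] by (simp add: fun_eq_iff)
  obtain z where z: "z \<in> reduced_words n (?s \<circ> (?t \<circ> (?s \<circ> w)))"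
    using reduced_words_nonempty permutes_adj_transp_comp[OF perms(3) i] by blast
  have "inv (?t \<circ> (?s \<circ> w)) (Suc i) < inv (?t \<circ> (?s \<circ> w)) i"
    using di1 by (simp add: inv_adj_transp_comp_apply[OF perms(1)] inv_adj_transp_comp_apply[OF perms(2)]
        inv_adj_transp_comp_apply[OF w] adj_transp_apply)
  from Cons_mem_reduced_wordsI[OF perms(3) i this z]
  have "i # z \<in> reduced_words n (?t \<circ> (?s \<circ> w))" .
  moreover have "inv (?s \<circ> w) (Suc (Suc i)) < inv (?s \<circ> w) (Suc i)"
    using di di1 by (simp add: inv_adj_transp_comp_apply[OF w] adj_transp_apply)
  ultimately have a2: "Suc i # i # z \<in> reduced_words n (?s \<circ> w)"
    using Cons_mem_reduced_wordsI[OF perms(1) i1] by blast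
  have "inv (?s \<circ> (?t \<circ> w)) (Suc (Suc i)) < inv (?s \<circ> (?t \<circ> w)) (Suc i)"
    using di by (simp add: inv_adj_transp_comp_apply[OF perms(1)] inv_adj_transp_comp_apply[OF perms(2)]
        inv_adj_transp_comp_apply[OF w] adj_transp_apply)
  from Cons_mem_reduced_wordsI[OF perms(4) i1 this] z braid
  have "Suc i # z \<in> reduced_words n (?s \<circ> (?t \<circ> w))" by simp
  moreover have "inv (?t \<circ> w) (Suc i) < inv (?t \<circ> w) i"
    using di di1 by (simp add: inv_adj_transp_comp_apply[OF w] adj_transp_apply)
  ultimately have b2: "i # Suc i # z \<in> reduced_words n (?t \<circ> w)"
    using Cons_mem_reduced_wordsI[OF perms(2) i] by blast
  have "(reduced_move n (?s \<circ> w))\<^sup>*\<^sup>* u' (Suc i # i # z)"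
    using IH[OF perms(1) u' a2] by simp
  then have "(reduced_move n w)\<^sup>*\<^sup>* (i # u') (i # Suc i # i # z)"
    by (rule reduced_moves_Cons[OF w i di])
  moreover have "reduced_move n w (i # Suc i # i # z) (Suc i # i # Suc i # z)"
  proof -
    have "braid_move (i # Suc i # i # z) (Suc i # i # Suc i # z)"
      unfolding braid_move_def by (intro exI[of _ "[]"] exI[of _ z] exI[of _ i]) simp
    with Cons_mem_reduced_wordsI[OF w i di a2] Cons_mem_reduced_wordsI[OF w i1 di1 b2]
    show ?thesis by (simp add: reduced_move_def)
  qed
  moreover have "(reduced_move n (?t \<circ> w))\<^sup>*\<^sup>* (i # Suc i # z) v'"
    using IH[OF perms(2) b2 v'] length_reduced_word[OF u] length_reduced_word[OF v]
      length_reduced_word[OF b2] length_reduced_word[OF v'] by simp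
  then have "(reduced_move n w)\<^sup>*\<^sup>* (Suc i # i # Suc i # z) (Suc i # v')"
    by (rule reduced_moves_Cons[OF w i1 di1])
  ultimately show ?thesis by (meson rtranclp.rtrancl_into_rtrancl rtranclp_trans)
qed

theorem reduced_words_connected:
  assumes "w permutes {1..n}" "u \<in> reduced_words n w" "v \<in> reduced_words n w"
  shows "(reduced_move n w)\<^sup>*\<^sup>* u v"
  using assms
proof (induction "length u" arbitrary: w u v rule: less_induct)
  case less
  note w = less.prems(1)
  have len_v: "length v = length u"
    using length_reduced_word less.prems(2,3) by simp
  show ?case
  proof (cases u)
    case Nil
    with len_v show ?thesis by simp
  next
    case (Cons i u')
    with len_v obtain j v' where v: "v = j # v'" by (cases v) auto
    have IH: "\<And>w' x y. w' permutes {1..n} \<Longrightarrow> x \<in> reduced_words n w' \<Longrightarrow>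
        y \<in> reduced_words n w' \<Longrightarrow> length x < length (a # a') \<Longrightarrow> (reduced_move n w')\<^sup>*\<^sup>* x y"
      if "length (a # a') = length u" for a a'
      using less.hyps that by simp
    have different: "(reduced_move n w)\<^sup>*\<^sup>* (a # a') (b # b')"
      if "a < b" "a # a' \<in> reduced_words n w" "b # b' \<in> reduced_words n w"
        "length (a # a') = length u" for a a' b b'
    proof (cases "b = Suc a")
      case True
      with that show ?thesis using reduced_moves_braid_descents[OF IH[OF that(4)] w] by simp
    next
      case False
      with that show ?thesis using reduced_moves_commuting_descents[OF IH[OF that(4)] w] by simp
    qed
    consider "i = j" | "i < j" | "j < i" by linarith
    then show ?thesis
    proof cases
      case 1
      with less.prems Cons v have i: "1 \<le> i" "i < n" and di: "inv w (Suc i) < inv w i"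
        and u': "u' \<in> reduced_words n (adj_transp i \<circ> w)"
        and v': "v' \<in> reduced_words n (adj_transp i \<circ> w)"
        by (simp_all add: Cons_mem_reduced_words_iff[OF w])
      have "(reduced_move n (adj_transp i \<circ> w))\<^sup>*\<^sup>* u' v'"
        using less.hyps permutes_adj_transp_comp[OF w i] u' v' Cons by simp
      with 1 Cons v show ?thesis using reduced_moves_Cons[OF w i di] by simp
    next
      case 2
      with less.prems Cons v show ?thesis using different by simp
    next
      case 3
      with less.prems Cons v len_v have "(reduced_move n w)\<^sup>*\<^sup>* v u"
        using different by simp
      then show ?thesis by (metis symp_reduced_move symp_rtranclp sympD)
    qed
  qed
qed

section \<open>Inversion sequences\<close>

lemma list_eq_if_pair_filters_eq:
  "(\<And>A B. filter (\<lambda>Z. Z \<in> {A, B}) xs = filter (\<lambda>Z. Z \<in> {A, B}) ys) \<Longrightarrow> xs = ys"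
proof (induction xs arbitrary: ys)
  case Nil
  show ?case
  proof (cases ys)
    case (Cons Y ys')
    with Nil.prems[of Y Y] show ?thesis by simp
  qed simp
next
  case (Cons X xs)
  from Cons.prems[of X X] obtain Y ys' where ys: "ys = Y # ys'"
    by (cases ys) (auto split: if_splits)
  from Cons.prems[of X Y] ys have "X = Y" by (simp split: if_splits)
  have "filter (\<lambda>Z. Z \<in> {A, B}) xs = filter (\<lambda>Z. Z \<in> {A, B}) ys'" for A B
    using Cons.prems[of A B] ys \<open>X = Y\<close> by (simp split: if_splits)
  with Cons.IH ys \<open>X = Y\<close> show ?case by simp
qed

lemma filter_swap:
  "\<not> (P x \<and> P y) \<Longrightarrow> filter P (us @ [x, y] @ vs) = filter P (us @ [y, x] @ vs)"
  by (cases "P x"; cases "P y") simp_all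

lemma filter_reverse_triple:
  "\<not> (P x \<and> P y) \<Longrightarrow> \<not> (P x \<and> P z) \<Longrightarrow> \<not> (P y \<and> P z) \<Longrightarrow>
    filter P (us @ [x, y, z] @ vs) = filter P (us @ [z, y, x] @ vs)"
  by (cases "P x"; cases "P y"; cases "P z") simp_all

text \<open>Entry k of the inversion sequence of a word i_1 ... i_m is the set
  s_{i_1} ... s_{i_{k-1}} ` {i_k, i_k + 1}. A commutation move swaps two adjacent disjoint
  entries, a braid move reverses three adjacent pairwise intersecting ones.\<close>
fun inversion_sequence :: "nat list \<Rightarrow> nat set list" where
  "inversion_sequence [] = []"
| "inversion_sequence (i # ws) = {i, Suc i} # map ((`) (adj_transp i)) (inversion_sequence ws)"

lemma inversion_sequence_append:
  "inversion_sequence (xs @ ys) = inversion_sequence xs @ map ((`) (word_perm xs)) (inversion_sequence ys)"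
  by (induction xs) (auto simp: image_comp)

lemma inversion_sequence_inject: "inversion_sequence u = inversion_sequence v \<Longrightarrow> u = v"
proof (induction u arbitrary: v)
  case Nil then show ?case by (cases v) auto
next
  case (Cons i u)
  then obtain j v' where v: "v = j # v'" by (cases v) auto
  with Cons.prems have "{i, Suc i} = {j, Suc j}" by simp
  then have "i = j" by (auto simp: doubleton_eq_iff)
  with Cons.prems v have "map ((`) (adj_transp i)) (map ((`) (adj_transp i)) (inversion_sequence u))
    = map ((`) (adj_transp i)) (map ((`) (adj_transp i)) (inversion_sequence v'))" by simp
  then have "inversion_sequence u = inversion_sequence v'" by (simp add: comp_def)
  with Cons.IH v \<open>i = j\<close> show ?case by simp
qed

lemma inversion_sequence_commute:
  assumes "Suc i < j \<or> Suc j < i"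
  shows "inversion_sequence ([i, j] @ y) =
    [{i, Suc i}, {j, Suc j}] @ map ((`) (adj_transp i \<circ> adj_transp j)) (inversion_sequence y)"
proof -
  have "adj_transp i ` {j, Suc j} = {j, Suc j}" using assms by (auto simp: adj_transp_apply)
  then show ?thesis by (simp add: inversion_sequence_append[of "[i, j]"] image_comp)
qed

lemma inversion_sequence_braid:
  "inversion_sequence ([i, Suc i, i] @ y) = [{i, Suc i}, {i, Suc (Suc i)}, {Suc i, Suc (Suc i)}] @
     map ((`) (adj_transp i \<circ> (adj_transp (Suc i) \<circ> adj_transp i))) (inversion_sequence y)"
  "inversion_sequence ([Suc i, i, Suc i] @ y) = [{Suc i, Suc (Suc i)}, {i, Suc (Suc i)}, {i, Suc i}] @
     map ((`) (adj_transp i \<circ> (adj_transp (Suc i) \<circ> adj_transp i))) (inversion_sequence y)"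
proof -
  have "adj_transp i ` {Suc i, Suc (Suc i)} = {i, Suc (Suc i)}"
    "adj_transp i ` adj_transp (Suc i) ` {i, Suc i} = {Suc i, Suc (Suc i)}"
    by (auto simp: adj_transp_apply)
  then show "inversion_sequence ([i, Suc i, i] @ y) = [{i, Suc i}, {i, Suc (Suc i)}, {Suc i, Suc (Suc i)}] @
     map ((`) (adj_transp i \<circ> (adj_transp (Suc i) \<circ> adj_transp i))) (inversion_sequence y)"
    by (simp add: inversion_sequence_append[of "[i, Suc i, i]"] image_comp)
next
  have "adj_transp (Suc i) ` {i, Suc i} = {i, Suc (Suc i)}"
    "adj_transp (Suc i) ` adj_transp i ` {Suc i, Suc (Suc i)} = {i, Suc i}"
    by (auto simp: adj_transp_apply)
  moreover have "adj_transp (Suc i) (adj_transp i (adj_transp (Suc i) x)) =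
    adj_transp i (adj_transp (Suc i) (adj_transp i x))" for x
    using adj_transp_braid[of i] by (simp add: fun_eq_iff)
  ultimately show "inversion_sequence ([Suc i, i, Suc i] @ y) = [{Suc i, Suc (Suc i)}, {i, Suc (Suc i)}, {i, Suc i}] @
     map ((`) (adj_transp i \<circ> (adj_transp (Suc i) \<circ> adj_transp i))) (inversion_sequence y)"
    by (simp add: inversion_sequence_append[of "[Suc i, i, Suc i]"] image_comp)
qed

lemma Int_eq_if_distinct_mem_doubleton:
  "X \<in> {A, B} \<Longrightarrow> Y \<in> {A, B} \<Longrightarrow> X \<noteq> Y \<Longrightarrow> A \<inter> B = X \<inter> Y"
  by auto

lemma comm_move_filter_inversion_sequence:
  assumes "comm_move u v" and "A \<inter> B \<noteq> {}"
  shows "filter (\<lambda>Z. Z \<in> {A, B}) (inversion_sequence u) = filter (\<lambda>Z. Z \<in> {A, B}) (inversion_sequence v)"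
proof -
  obtain x y i j where ij: "Suc i < j \<or> Suc j < i" and u: "u = x @ [i, j] @ y" and v: "v = x @ [j, i] @ y"
    using assms(1) unfolding comm_move_def by blast
  let ?p = "word_perm x"
  let ?X = "?p ` {i, Suc i}" and ?Y = "?p ` {j, Suc j}"
  let ?T = "map ((`) ?p) (map ((`) (adj_transp i \<circ> adj_transp j)) (inversion_sequence y))"
  have ji: "Suc j < i \<or> Suc i < j" using ij by blast
  have commute: "adj_transp j \<circ> adj_transp i = adj_transp i \<circ> adj_transp j"
    using adj_transp_commute[OF ij] by simp
  have seqs: "inversion_sequence u = inversion_sequence x @ [?X, ?Y] @ ?T"
    "inversion_sequence v = inversion_sequence x @ [?Y, ?X] @ ?T"
    unfolding u v
    by (simp_all only: inversion_sequence_append[of x] inversion_sequence_commute[OF ij]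
        inversion_sequence_commute[OF ji] commute map_append list.map)
  have "inj ?p" using bij_word_perm bij_is_inj by blast
  then have "?X \<inter> ?Y = ?p ` ({i, Suc i} \<inter> {j, Suc j})" by (simp only: image_Int)
  also have "\<dots> = {}" using ij by auto
  finally have "?X \<inter> ?Y = {}" .
  moreover from this have "?X \<noteq> ?Y" by auto
  ultimately have "\<not> (?X \<in> {A, B} \<and> ?Y \<in> {A, B})" using assms(2)
    using Int_eq_if_distinct_mem_doubleton by metis
  then show ?thesis unfolding seqs by (rule filter_swap)
qed

lemma braid_move_filter_inversion_sequence:
  assumes "braid_move u v" and "A \<inter> B = {}"
  shows "filter (\<lambda>Z. Z \<in> {A, B}) (inversion_sequence u) = filter (\<lambda>Z. Z \<in> {A, B}) (inversion_sequence v)"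
proof -
  have braid: "filter (\<lambda>Z. Z \<in> {A, B}) (inversion_sequence (x @ [i, Suc i, i] @ y))
    = filter (\<lambda>Z. Z \<in> {A, B}) (inversion_sequence (x @ [Suc i, i, Suc i] @ y))" for x y i
  proof -
    let ?p = "word_perm x"
    let ?X = "?p ` {i, Suc i}" and ?Y = "?p ` {i, Suc (Suc i)}" and ?Z = "?p ` {Suc i, Suc (Suc i)}"
    let ?T = "map ((`) ?p) (map ((`) (adj_transp i \<circ> (adj_transp (Suc i) \<circ> adj_transp i)))
      (inversion_sequence y))"
    have seqs: "inversion_sequence (x @ [i, Suc i, i] @ y) = inversion_sequence x @ [?X, ?Y, ?Z] @ ?T"
      "inversion_sequence (x @ [Suc i, i, Suc i] @ y) = inversion_sequence x @ [?Z, ?Y, ?X] @ ?T"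
      by (simp_all only: inversion_sequence_append[of x] inversion_sequence_braid map_append list.map)
    have "inj ?p" using bij_word_perm bij_is_inj by blast
    then have "?X \<inter> ?Y \<noteq> {}" "?X \<inter> ?Z \<noteq> {}" "?Y \<inter> ?Z \<noteq> {}" "?X \<noteq> ?Y" "?X \<noteq> ?Z" "?Y \<noteq> ?Z"
      by (auto simp: inj_image_eq_iff doubleton_eq_iff inj_eq)
    with assms(2) Int_eq_if_distinct_mem_doubleton[of _ A B]
    have "\<not> (?X \<in> {A, B} \<and> ?Y \<in> {A, B})" "\<not> (?X \<in> {A, B} \<and> ?Z \<in> {A, B})"
      "\<not> (?Y \<in> {A, B} \<and> ?Z \<in> {A, B})" by metis+
    then show ?thesis unfolding seqs by (rule filter_reverse_triple)
  qed
  from assms(1) show ?thesis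
    unfolding braid_move_def using braid by auto
qed

section \<open>The graph Gamma(w)\<close>

definition move_class :: "('a \<Rightarrow> 'a \<Rightarrow> bool) \<Rightarrow> 'a set \<Rightarrow> 'a \<Rightarrow> 'a set" where
  "move_class mv S u = {v \<in> S. (induced_adj S mv)\<^sup>*\<^sup>* u v}"

lemma move_classes_eq_image: "move_classes mv S = move_class mv S ` S"
  unfolding move_classes_def move_class_def induced_adj_def by simp

lemma move_class_subset: "move_class mv S u \<subseteq> S"
  by (auto simp: move_class_def)

lemma move_class_self: "u \<in> S \<Longrightarrow> u \<in> move_class mv S u"
  by (simp add: move_class_def)

lemma move_class_eq:
  assumes "symp mv" and "v \<in> move_class mv S u"
  shows "move_class mv S v = move_class mv S u"
proof -
  from assms(2) have "(induced_adj S mv)\<^sup>*\<^sup>* u v" by (simp add: move_class_def)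
  moreover from this have "(induced_adj S mv)\<^sup>*\<^sup>* v u"
    using symp_rtranclp[OF symp_induced_adj[OF assms(1)]] by (rule sympD[rotated])
  ultimately show ?thesis unfolding move_class_def by (meson rtranclp_trans)
qed

lemma move_class_eq_if_move:
  "symp mv \<Longrightarrow> u \<in> S \<Longrightarrow> v \<in> S \<Longrightarrow> mv u v \<Longrightarrow> move_class mv S v = move_class mv S u"
  by (rule move_class_eq) (auto simp: move_class_def induced_adj_def)

lemma move_class_invariant:
  assumes "\<And>x y. mv x y \<Longrightarrow> f x = f y" and "v \<in> move_class mv S u"
  shows "f v = f u"
proof -
  from assms(2) have "(induced_adj S mv)\<^sup>*\<^sup>* u v" by (simp add: move_class_def)
  then show ?thesis
    by (induction rule: rtranclp_induct) (auto simp: induced_adj_def dest: assms(1))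
qed

text \<open>A braid class and a commutation class share at most one word: braid moves preserve the
  relative order of disjoint entries of the inversion sequence, commutation moves that of
  intersecting entries, and the relative orders of all pairs of entries determine the word.\<close>
lemma braid_class_Int_comm_class_unique:
  assumes "u \<in> move_class braid_move S r \<inter> move_class comm_move S r'"
    and "v \<in> move_class braid_move S r \<inter> move_class comm_move S r'"
  shows "u = v"
proof -
  let ?f = "\<lambda>A B x. filter (\<lambda>Z. Z \<in> {A, B}) (inversion_sequence x)"
  have "?f A B u = ?f A B v" for A B
  proof (cases "A \<inter> B = {}")
    case True
    have "?f A B x = ?f A B r" if "x \<in> move_class braid_move S r" for x
      using braid_move_filter_inversion_sequence[OF _ True] that by (rule move_class_invariant)
    with assms show ?thesis by simp
  next
    case False
    have "?f A B x = ?f A B r'" if "x \<in> move_class comm_move S r'" for x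
      using comm_move_filter_inversion_sequence[OF _ False] that by (rule move_class_invariant)
    with assms show ?thesis by simp
  qed
  then have "inversion_sequence u = inversion_sequence v" by (rule list_eq_if_pair_filters_eq)
  then show ?thesis by (rule inversion_sequence_inject)
qed

abbreviation braid_class :: "nat \<Rightarrow> (nat \<Rightarrow> nat) \<Rightarrow> nat list \<Rightarrow> nat list set" where
  "braid_class n w \<equiv> move_class braid_move (reduced_words n w)"

abbreviation comm_class :: "nat \<Rightarrow> (nat \<Rightarrow> nat) \<Rightarrow> nat list \<Rightarrow> nat list set" where
  "comm_class n w \<equiv> move_class comm_move (reduced_words n w)"

lemma symp_gamma_adj: "symp gamma_adj"
  unfolding gamma_adj_def by (auto intro: sympI)

lemma irreflp_gamma_adj: "irreflp gamma_adj"
  unfolding gamma_adj_def by (auto intro: irreflpI)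

lemma card_gamma_vertices:
  "card (gamma_vertices n w) = card (braid_classes n w) + card (comm_classes n w)"
proof -
  have "gamma_vertices n w = braid_classes n w <+> comm_classes n w"
    by (simp add: gamma_vertices_def Plus_def)
  then show ?thesis
    by (simp add: card_Plus braid_classes_def comm_classes_def move_classes_eq_image
        finite_reduced_words)
qed

lemma finite_gamma_vertices: "finite (gamma_vertices n w)"
  by (simp add: gamma_vertices_def braid_classes_def comm_classes_def move_classes_eq_image
      finite_reduced_words)

lemma gamma_edge_of_reduced_word:
  "r \<in> reduced_words n w \<Longrightarrow> induced_adj (gamma_vertices n w) gamma_adj
     (Inl (braid_class n w r)) (Inr (comm_class n w r))"
  by (auto simp: induced_adj_def gamma_adj_def gamma_vertices_def braid_classes_def
      comm_classes_def move_classes_eq_image intro: move_class_self)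

lemma edge_set_gamma:
  "edge_set (gamma_vertices n w) gamma_adj =
    (\<lambda>r. {Inl (braid_class n w r), Inr (comm_class n w r)}) ` reduced_words n w"
proof (intro equalityI subsetI)
  fix x assume "x \<in> edge_set (gamma_vertices n w) gamma_adj"
  then obtain a b where ab: "x = {a, b}" "induced_adj (gamma_vertices n w) gamma_adj a b"
    unfolding edge_set_def by blast
  then have "\<exists>B C. x = {Inl B, Inr C} \<and> B \<inter> C \<noteq> {} \<and>
      Inl B \<in> gamma_vertices n w \<and> Inr C \<in> gamma_vertices n w"
  proof -
    from ab(2) obtain B C where BC: "a = Inl B \<and> b = Inr C \<or> a = Inr C \<and> b = Inl B"
      "B \<inter> C \<noteq> {}" "a \<in> gamma_vertices n w" "b \<in> gamma_vertices n w"
      unfolding induced_adj_def gamma_adj_def by blast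
    then have "x = {Inl B, Inr C}" using ab(1) by (auto simp: insert_commute)
    with BC show ?thesis by blast
  qed
  then obtain B C r where x: "x = {Inl B, Inr C}" and r: "r \<in> B" "r \<in> C"
    and "Inl B \<in> gamma_vertices n w" "Inr C \<in> gamma_vertices n w"
    by blast
  then have B: "B \<in> braid_classes n w" and C: "C \<in> comm_classes n w"
    unfolding gamma_vertices_def by auto
  from B obtain r0 where r0: "B = braid_class n w r0"
    unfolding braid_classes_def move_classes_eq_image by blast
  from C obtain r1 where r1: "C = comm_class n w r1"
    unfolding comm_classes_def move_classes_eq_image by blast
  have bc: "braid_class n w r = B"
    unfolding r0 by (rule move_class_eq[OF symp_braid_move r(1)[unfolded r0]])
  have cc: "comm_class n w r = C"
    unfolding r1 by (rule move_class_eq[OF symp_comm_move r(2)[unfolded r1]])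
  have "r \<in> reduced_words n w"
    by (rule subsetD[OF move_class_subset r(1)[unfolded r0]])
  then show "x \<in> (\<lambda>r. {Inl (braid_class n w r), Inr (comm_class n w r)}) ` reduced_words n w"
    unfolding x by (rule image_eqI[rotated]) (simp add: bc cc)
next
  fix x assume "x \<in> (\<lambda>r. {Inl (braid_class n w r), Inr (comm_class n w r)}) ` reduced_words n w"
  then obtain r where "r \<in> reduced_words n w" "x = {Inl (braid_class n w r), Inr (comm_class n w r)}"
    by blast
  then show "x \<in> edge_set (gamma_vertices n w) gamma_adj"
    using edge_setI[OF gamma_edge_of_reduced_word] by simp
qed

lemma card_edge_set_gamma:
  "card (edge_set (gamma_vertices n w) gamma_adj) = card (reduced_words n w)"
proof -
  have "inj_on (\<lambda>r. {Inl (braid_class n w r), Inr (comm_class n w r)}) (reduced_words n w)"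
  proof (rule inj_onI)
    fix r r' assume r: "r \<in> reduced_words n w" "r' \<in> reduced_words n w"
      and "{Inl (braid_class n w r), Inr (comm_class n w r)}
        = {Inl (braid_class n w r'), Inr (comm_class n w r')}"
    then have "braid_class n w r = braid_class n w r'" "comm_class n w r = comm_class n w r'"
      by (auto simp: doubleton_eq_iff)
    with r show "r = r'"
      using braid_class_Int_comm_class_unique move_class_self by (metis IntI)
  qed
  then show ?thesis by (simp add: edge_set_gamma card_image)
qed

lemma gamma_connected:
  assumes w: "w permutes {1..n}" and r: "r \<in> reduced_words n w"
  shows "\<forall>x\<in>gamma_vertices n w.
    (induced_adj (gamma_vertices n w) gamma_adj)\<^sup>*\<^sup>* (Inl (braid_class n w r)) x"
proof -
  let ?E = "induced_adj (gamma_vertices n w) gamma_adj"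
  have edge: "?E (Inl (braid_class n w u)) (Inr (comm_class n w u))"
    "?E (Inr (comm_class n w u)) (Inl (braid_class n w u))"
    if "u \<in> reduced_words n w" for u
    using gamma_edge_of_reduced_word[OF that] symp_induced_adj[OF symp_gamma_adj] by (auto dest: sympD)
  \<comment> \<open>A braid move stays inside a braid class; a commutation move crosses the edges of its two words.\<close>
  have move: "?E\<^sup>*\<^sup>* (Inl (braid_class n w u)) (Inl (braid_class n w v))"
    if "reduced_move n w u v" for u v
  proof -
    from that have u: "u \<in> reduced_words n w" and v: "v \<in> reduced_words n w"
      and "braid_move u v \<or> comm_move u v" by (simp_all add: reduced_move_def)
    then consider "braid_move u v" | "comm_move u v" by blast
    then show ?thesis
    proof cases
      case 1
      with u v have "braid_class n w v = braid_class n w u"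
        by (intro move_class_eq_if_move) (simp_all add: symp_braid_move)
      then show ?thesis by simp
    next
      case 2
      with u v have "comm_class n w v = comm_class n w u"
        by (intro move_class_eq_if_move) (simp_all add: symp_comm_move)
      with edge[OF u] edge[OF v] show ?thesis
        by (metis r_into_rtranclp rtranclp.rtrancl_into_rtrancl)
    qed
  qed
  have path: "?E\<^sup>*\<^sup>* (Inl (braid_class n w r)) (Inl (braid_class n w u))"
    if "u \<in> reduced_words n w" for u
    using reduced_words_connected[OF w r that]
  proof (induction rule: rtranclp_induct)
    case (step y z)
    from step.IH move[OF step.hyps(2)] show ?case by (rule rtranclp_trans)
  qed simp
  show ?thesis
  proof
    fix x assume "x \<in> gamma_vertices n w"
    then obtain u where u: "u \<in> reduced_words n w"
      and "x = Inl (braid_class n w u) \<or> x = Inr (comm_class n w u)"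
      unfolding gamma_vertices_def braid_classes_def comm_classes_def move_classes_eq_image
      by blast
    then show "?E\<^sup>*\<^sup>* (Inl (braid_class n w r)) x"
      using path[OF u] edge[OF u] by (auto intro: rtranclp.rtrancl_into_rtrancl)
  qed
qed

theorem proposition4p14:
  fixes n :: nat and w :: "nat \<Rightarrow> nat"
  assumes "w permutes {1..n}"
  shows "circuit_free n w \<longleftrightarrow>
    int (card (reduced_words n w)) =
      int (card (braid_classes n w)) + int (card (comm_classes n w)) - 1"
proof -
  obtain r where r: "r \<in> reduced_words n w"
    using reduced_words_nonempty[OF assms] by blast
  then have "Inl (braid_class n w r) \<in> gamma_vertices n w"
    using gamma_edge_of_reduced_word by (auto simp: induced_adj_def)
  have "\<not> has_cycle (gamma_vertices n w) gamma_adj \<longleftrightarrow>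
      card (edge_set (gamma_vertices n w) gamma_adj) + 1 = card (gamma_vertices n w)"
    by (rule acyclic_iff_card_edge_set[OF finite_gamma_vertices \<open>_ \<in> gamma_vertices n w\<close>
          gamma_connected[OF assms r] symp_gamma_adj irreflp_gamma_adj])
  then show ?thesis
    unfolding circuit_free_def card_edge_set_gamma card_gamma_vertices by linarith
qed

end
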